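(* Let $$\Delta t_{\mathrm{CFL}}=\frac{2}{\frac{2\hbar}{m}\left(\frac{1}{(\Delta x)^2}+\frac{1}{(\Delta y)^2}+\frac{1}{(\Delta z)^2}\right)+\frac{\max_{i,j,k}|U_{i,j,k}|}{\hbar}}$$ be the CFL limit of the whole region, and for $1\le i\le n_x$, $1\le j\le n_y$, $1\le k\le n_z$ let $\Delta t^{(i,j,k)}_{\mathrm{CFL,gen}}$ be the generalized CFL limit of the single-cell region ($n_x=n_y=n_z=1$) formed by the primary cell with corners $(i,j,k)$ and $(i+1,j+1,k+1)$, with potential $U_{i+a,j+b,k+c}$ ($a,b,c\in\{0,1\}$) at its local node $(a+1,b+1,c+1)$. Then $$\Delta t_{\mathrm{CFL}}\le\min_{i,j,k}\Delta t^{(i,j,k)}_{\mathrm{CFL,gen}}.$$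
   Context: Fix constants $\hbar>0$, $m>0$, cell sizes $\Delta x,\Delta y,\Delta z>0$ and positive integers $n_x,n_y,n_z$. The region is a box of $n_x\times n_y\times n_z$ primary cells of size $\Delta x\times\Delta y\times\Delta z$ with primary nodes $(i,j,k)$, $1\le i\le n_x+1$, $1\le j\le n_y+1$, $1\le k\le n_z+1$, carrying real potential values $U_{i,j,k}$. For a single-cell region (local nodes $(a+1,b+1,c+1)$, $a,b,c\in\{0,1\}$, ordered by $(a+1)+2b+4c$), let $D_U$ be the $8\times 8$ diagonal matrix of its node potentials, $I_p$ the $p\times p$ identity, $W_1=[-1\ \ 1]$, $\otimes$ the Kronecker product, and define $D_V''=\frac{\Delta x\Delta y\Delta z}{8}I_8$; $D=-[I_2\otimes I_2\otimes W_1^T\ \ I_2\otimes W_1^T\otimes I_2\ \ W_1^T\otimes I_2\otimes I_2]$; $D_S''=\mathrm{diag}(\frac{\Delta y\Delta z}{4}I_4,\frac{\Delta x\Delta z}{4}I_4,\frac{\Delta x\Delta y}{4}I_4)$; $D_l'=\mathrm{diag}(\Delta x I_4,\Delta y I_4,\Delta z I_4)$; $H=\frac{\hbar^2}{2m}D D_S''(D_l')^{-1}D^T+D_V''D_U$. Its generalized CFL limit is $2/\rho\!\left(\frac{1}{\hbar}(D_V'')^{-1/2}H(D_V'')^{-1/2}\right)$, with $\rho$ the spectral radius. *)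

theory Defs
  imports "Jordan_Normal_Form.Spectral_Radius"
begin

definition kron :: "'a :: times mat \<Rightarrow> 'a mat \<Rightarrow> 'a mat" where
  "kron A B = mat (dim_row A * dim_row B) (dim_col A * dim_col B)
     (\<lambda>(i, j). A $$ (i div dim_row B, j div dim_col B) * B $$ (i mod dim_row B, j mod dim_col B))"

definition hcat :: "'a :: zero mat \<Rightarrow> 'a mat \<Rightarrow> 'a mat" where
  "hcat A B = mat (dim_row A) (dim_col A + dim_col B)
     (\<lambda>(i, j). if j < dim_col A then A $$ (i, j) else B $$ (i, j - dim_col A))"

definition W1 :: "real mat" where
  "W1 = mat_of_rows_list 2 [[-1, 1]]"

definition Dmat :: "real mat" where
  "Dmat = - hcat (kron (1\<^sub>m 2) (kron (1\<^sub>m 2) (transpose_mat W1)))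
             (hcat (kron (1\<^sub>m 2) (kron (transpose_mat W1) (1\<^sub>m 2)))
                   (kron (transpose_mat W1) (kron (1\<^sub>m 2) (1\<^sub>m 2))))"

definition DV2 :: "real \<Rightarrow> real \<Rightarrow> real \<Rightarrow> real mat" where
  "DV2 dx dy dz = (dx * dy * dz / 8) \<cdot>\<^sub>m 1\<^sub>m 8"

definition DS2 :: "real \<Rightarrow> real \<Rightarrow> real \<Rightarrow> real mat" where
  "DS2 dx dy dz = diag_block_mat [(dy * dz / 4) \<cdot>\<^sub>m 1\<^sub>m 4, (dx * dz / 4) \<cdot>\<^sub>m 1\<^sub>m 4,
                                   (dx * dy / 4) \<cdot>\<^sub>m 1\<^sub>m 4]"

definition Dl1 :: "real \<Rightarrow> real \<Rightarrow> real \<Rightarrow> real mat" where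
  "Dl1 dx dy dz = diag_block_mat [dx \<cdot>\<^sub>m 1\<^sub>m 4, dy \<cdot>\<^sub>m 1\<^sub>m 4, dz \<cdot>\<^sub>m 1\<^sub>m 4]"

definition Dl1_inv :: "real \<Rightarrow> real \<Rightarrow> real \<Rightarrow> real mat" where
  "Dl1_inv dx dy dz = diag_block_mat [(1 / dx) \<cdot>\<^sub>m 1\<^sub>m 4, (1 / dy) \<cdot>\<^sub>m 1\<^sub>m 4, (1 / dz) \<cdot>\<^sub>m 1\<^sub>m 4]"

text \<open>D_U for a single cell: potentials u of the local nodes, local node (a+1,b+1,c+1)
  at 0-based position a + 2b + 4c.\<close>
definition DU :: "(nat \<Rightarrow> nat \<Rightarrow> nat \<Rightarrow> real) \<Rightarrow> real mat" where
  "DU u = mat_diag 8 (\<lambda>p. u (p mod 2) ((p div 2) mod 2) (p div 4))"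

definition Hcell :: "real \<Rightarrow> real \<Rightarrow> real \<Rightarrow> real \<Rightarrow> real \<Rightarrow>
                     (nat \<Rightarrow> nat \<Rightarrow> nat \<Rightarrow> real) \<Rightarrow> real mat" where
  "Hcell hbar m dx dy dz u =
     (hbar^2 / (2 * m)) \<cdot>\<^sub>m (Dmat * DS2 dx dy dz * Dl1_inv dx dy dz * transpose_mat Dmat)
     + DV2 dx dy dz * DU u"

definition DV2_inv_sqrt :: "real \<Rightarrow> real \<Rightarrow> real \<Rightarrow> real mat" where
  "DV2_inv_sqrt dx dy dz = (1 / sqrt (dx * dy * dz / 8)) \<cdot>\<^sub>m 1\<^sub>m 8"

definition cfl_gen_cell :: "real \<Rightarrow> real \<Rightarrow> real \<Rightarrow> real \<Rightarrow> real \<Rightarrow>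
                     (nat \<Rightarrow> nat \<Rightarrow> nat \<Rightarrow> real) \<Rightarrow> real" where
  "cfl_gen_cell hbar m dx dy dz u =
     2 / spectral_radius (map_mat complex_of_real
        ((1 / hbar) \<cdot>\<^sub>m (DV2_inv_sqrt dx dy dz * Hcell hbar m dx dy dz u * DV2_inv_sqrt dx dy dz)))"

definition cfl_region :: "real \<Rightarrow> real \<Rightarrow> real \<Rightarrow> real \<Rightarrow> real \<Rightarrow> nat \<Rightarrow> nat \<Rightarrow> nat \<Rightarrow>
                     (nat \<Rightarrow> nat \<Rightarrow> nat \<Rightarrow> real) \<Rightarrow> real" where
  "cfl_region hbar m dx dy dz nx ny nz U =
     2 / ((2 * hbar / m) * (1 / dx^2 + 1 / dy^2 + 1 / dz^2)
          + Max {\<bar>U i j k\<bar> | i j k. i \<in> {1..nx+1} \<and> j \<in> {1..ny+1} \<and> k \<in> {1..nz+1}} / hbar)"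

end

theory Submission
  imports Defs
begin

(* Since D_V'' is scalar, the scaled single-cell matrix (1/hbar) D_V''^(-1/2) H D_V''^(-1/2) equals
   k L + diag(u/hbar), where k = 4 hbar/(m dx dy dz) and L is the weighted graph Laplacian of the cube
   with edge weights dy dz/(4dx), dx dz/(4dy), dx dy/(4dz). Every row of L has absolute sum twice the
   total weight, so bounding the spectral radius by the maximal absolute row sum gives
   rho <= (2 hbar/m)(1/dx^2 + 1/dy^2 + 1/dz^2) + max|u|/hbar, and the potentials of one cell are bounded
   by those of the whole region. The matrix is real symmetric and nonzero, hence rho > 0: spectral radius 0
   would make it nilpotent (Jordan normal form), and a nilpotent real symmetric matrix vanishes.
   This positivity matters because 2 / 0 = 0 in HOL. *)

lemma pow_mat_add:
  assumes A: "(A :: 'a :: semiring_1 mat) \<in> carrier_mat n n"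
  shows "A ^\<^sub>m (k + l) = A ^\<^sub>m k * A ^\<^sub>m l"
proof (induction l)
  case 0
  show ?case using A by simp
next
  case (Suc l)
  have "A ^\<^sub>m (k + Suc l) = A ^\<^sub>m k * A ^\<^sub>m l * A" by (simp add: Suc)
  also have "\<dots> = A ^\<^sub>m k * A ^\<^sub>m Suc l"
    using A by (simp add: assoc_mult_mat[of _ n n _ n _ n])
  finally show ?case .
qed

lemma transpose_pow_mat_symmetric:
  assumes A: "(A :: 'a :: comm_semiring_1 mat) \<in> carrier_mat n n" and sym: "transpose_mat A = A"
  shows "transpose_mat (A ^\<^sub>m k) = A ^\<^sub>m k"
proof (induction k)
  case 0
  show ?case using A by simp
next
  case (Suc k)
  have "transpose_mat (A ^\<^sub>m Suc k) = A * A ^\<^sub>m k"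
    using A Suc sym by (simp add: transpose_mult[of _ n n _ n])
  also have "\<dots> = A ^\<^sub>m Suc k"
    using pow_mat_add[OF A, of 1 k] pow_mat_add[OF A, of k 1] A by simp
  finally show ?case .
qed

lemma symmetric_square_eq_0:
  assumes S: "(S :: 'a :: linordered_idom mat) \<in> carrier_mat n n" and sym: "transpose_mat S = S"
    and sq: "S * S = 0\<^sub>m n n"
  shows "S = 0\<^sub>m n n"
proof (rule eq_matI)
  fix i j assume "i < dim_row (0\<^sub>m n n :: 'a mat)" "j < dim_col (0\<^sub>m n n :: 'a mat)"
  hence i: "i < n" and j: "j < n" by auto
  have "(\<Sum>k\<in>{0..<n}. (S $$ (i,k))\<^sup>2) = (S * S) $$ (i,i)"
  proof -
    have "S $$ (k,i) = S $$ (i,k)" if "k < n" for k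
      using that i S sym by (metis carrier_matD index_transpose_mat(1))
    thus ?thesis using S i by (simp add: scalar_prod_def power2_eq_square)
  qed
  also have "\<dots> = 0" using sq i by simp
  finally have "\<forall>k\<in>{0..<n}. (S $$ (i,k))\<^sup>2 = 0"
    by (subst (asm) sum_nonneg_eq_0_iff) auto
  thus "S $$ (i,j) = 0\<^sub>m n n $$ (i,j)" using i j by simp
qed (use S in auto)

lemma symmetric_nilpotent_eq_0:
  assumes S: "(S :: 'a :: linordered_idom mat) \<in> carrier_mat n n" and sym: "transpose_mat S = S"
    and "S ^\<^sub>m Suc k = 0\<^sub>m n n"
  shows "S = 0\<^sub>m n n"
  using assms(3)
proof (induction k)
  case 0
  thus ?case using S by simp
next
  case (Suc k)
  have "S ^\<^sub>m Suc k * S ^\<^sub>m Suc k = S ^\<^sub>m Suc (Suc k) * S ^\<^sub>m k"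
    using pow_mat_add[OF S, of "Suc k" "Suc k"] pow_mat_add[OF S, of "Suc (Suc k)" k] by simp
  also have "\<dots> = 0\<^sub>m n n" using Suc.prems S by simp
  finally have "S ^\<^sub>m Suc k = 0\<^sub>m n n"
    by (rule symmetric_square_eq_0[OF pow_carrier_mat[OF S] transpose_pow_mat_symmetric[OF S sym]])
  thus ?case by (rule Suc.IH)
qed

lemma jordan_block_0_pow_eq_0:
  assumes "n \<le> k"
  shows "jordan_block n (0 :: 'a :: field) ^\<^sub>m k = 0\<^sub>m n n"
  using assms unfolding jordan_block_zero_pow by (intro eq_matI) auto

lemma diag_block_mat_zero_blocks:
  "diag_block_mat (map (\<lambda>(n, a). 0\<^sub>m n n) n_as)
    = (0\<^sub>m (sum_list (map fst n_as)) (sum_list (map fst n_as)) :: 'a :: zero mat)"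
  by (induction n_as) (simp_all add: Let_def case_prod_beta)

lemma jordan_matrix_pow_eq_0:
  assumes "\<And>n a. (n, a) \<in> set n_as \<Longrightarrow> a = 0 \<and> n \<le> k"
  shows "jordan_matrix (n_as :: (nat \<times> 'a :: field) list) ^\<^sub>m k
    = 0\<^sub>m (sum_list (map fst n_as)) (sum_list (map fst n_as))"
proof -
  have blocks: "map (\<lambda>(n, a). jordan_block n a ^\<^sub>m k) n_as = map (\<lambda>(n, a). 0\<^sub>m n n) n_as"
  proof (rule map_cong[OF refl])
    fix na assume "na \<in> set n_as"
    moreover obtain n a where na: "na = (n, a)" by force
    ultimately have "a = 0" "n \<le> k" using assms by blast+
    thus "(case na of (n, a) \<Rightarrow> jordan_block n a ^\<^sub>m k) = (case na of (n, a) \<Rightarrow> 0\<^sub>m n n)"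
      unfolding na by (simp add: jordan_block_0_pow_eq_0)
  qed
  show ?thesis unfolding jordan_matrix_pow blocks by (rule diag_block_mat_zero_blocks)
qed

lemma jordan_nf_block_eigenvalue:
  assumes A: "(A :: 'a :: field mat) \<in> carrier_mat n n" and jnf: "jordan_nf A n_as"
    and mem: "(na, a) \<in> set n_as"
  shows "eigenvalue A a"
proof -
  have "na \<noteq> 0" using jnf mem unfolding jordan_nf_def by force
  with jordan_nf_block_size_order_bound[OF jnf mem] have "order a (char_poly A) \<noteq> 0" by simp
  hence "poly (char_poly A) a = 0" using order_root by metis
  thus ?thesis using eigenvalue_root_char_poly[OF A] by simp
qed

lemma spectral_radius_eq_0_imp_nilpotent:
  assumes A: "(A :: complex mat) \<in> carrier_mat n n" and n: "n > 0" and sr: "spectral_radius A = 0"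
  shows "A ^\<^sub>m n = 0\<^sub>m n n"
proof -
  obtain n_as where jnf: "jordan_nf A n_as"
    using char_poly_factorized[OF A] jordan_nf_exists[OF A] by blast
  obtain P Q where PQ: "P \<in> carrier_mat n n" "Q \<in> carrier_mat n n"
    and pow: "\<And>k. A ^\<^sub>m k = P * jordan_matrix n_as ^\<^sub>m k * Q"
    using jordan_nf_powE[OF A jnf] by metis
  obtain n' where "A \<in> carrier_mat n' n'" "jordan_matrix n_as \<in> carrier_mat n' n'"
    using jnf similar_matD unfolding jordan_nf_def by blast
  hence size: "sum_list (map fst n_as) = n"
    using A by (metis carrier_matD(1) jordan_matrix_dim(1))
  have blocks: "a = 0 \<and> na \<le> n" if mem: "(na, a) \<in> set n_as" for na a
  proof
    have "norm a \<in> norm ` spectrum A"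
      using jordan_nf_block_eigenvalue[OF A jnf mem] unfolding spectrum_def by auto
    from spectral_radius_mem_max(2)[OF A n this] sr have "norm a \<le> 0" by simp
    thus "a = 0" by simp
    show "na \<le> n" using mem size member_le_sum_list[of na "map fst n_as"] by force
  qed
  have "jordan_matrix n_as ^\<^sub>m n = 0\<^sub>m n n"
    using jordan_matrix_pow_eq_0[of n_as n, OF blocks] unfolding size .
  thus ?thesis using pow[of n] PQ by simp
qed

lemma spectral_radius_pos_if_symmetric:
  assumes R: "(R :: real mat) \<in> carrier_mat n n" and sym: "transpose_mat R = R"
    and nz: "R \<noteq> 0\<^sub>m n n"
  shows "spectral_radius (map_mat complex_of_real R) > 0"
proof (rule ccontr)
  let ?A = "map_mat complex_of_real R"
  have A: "?A \<in> carrier_mat n n" using R by simp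
  have n: "n > 0" using R nz by (intro Nat.gr0I) (auto intro: eq_matI)
  assume "\<not> spectral_radius ?A > 0"
  moreover have "spectral_radius ?A \<ge> 0"
    using spectral_radius_mem_max(1)[OF A n] by auto
  ultimately have "?A ^\<^sub>m n = 0\<^sub>m n n"
    by (intro spectral_radius_eq_0_imp_nilpotent[OF A n]) simp
  also have "0\<^sub>m n n = map_mat complex_of_real (0\<^sub>m n n)" by (rule eq_matI) auto
  finally have "R ^\<^sub>m Suc (n - 1) = 0\<^sub>m n n"
    using n by (simp add: of_real_hom.mat_hom_pow[OF R, symmetric] of_real_hom.mat_hom_inj)
  with symmetric_nilpotent_eq_0[OF R sym] nz show False by blast
qed

lemma spectral_radius_le_row_sum:
  assumes A: "(A :: complex mat) \<in> carrier_mat n n" and n: "n > 0"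
    and rows: "\<And>i. i < n \<Longrightarrow> (\<Sum>j<n. norm (A $$ (i,j))) \<le> S"
  shows "spectral_radius A \<le> S"
proof -
  obtain l where l: "l \<in> spectrum A" and sr: "spectral_radius A = norm l"
    using spectral_radius_mem_max(1)[OF A n] by auto
  then obtain v where v: "v \<in> carrier_vec n" "v \<noteq> 0\<^sub>v n" "A *\<^sub>v v = l \<cdot>\<^sub>v v"
    using A unfolding spectrum_def eigenvalue_def eigenvector_def by auto
  let ?f = "\<lambda>j. norm (v $ j)"
  obtain i where i: "i < n" and imax: "\<And>j. j < n \<Longrightarrow> ?f j \<le> ?f i"
    using Max_in[of "?f ` {..<n}"] Max_ge[of "?f ` {..<n}"] n by fastforce
  have pos: "?f i > 0"
  proof (rule ccontr)
    assume "\<not> ?f i > 0"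
    hence "v $ j = 0" if "j < n" for j
      using imax[OF that] by (metis norm_le_zero_iff order.trans not_less)
    hence "v = 0\<^sub>v n" using v(1) by (intro eq_vecI) auto
    with v(2) show False by simp
  qed
  have "l * v $ i = (A *\<^sub>v v) $ i" using v i by simp
  also have "\<dots> = (\<Sum>j<n. A $$ (i,j) * v $ j)"
    using A v(1) i by (simp add: scalar_prod_def lessThan_atLeast0)
  finally have eigen_row: "l * v $ i = (\<Sum>j<n. A $$ (i,j) * v $ j)" .
  have "norm l * ?f i = norm (\<Sum>j<n. A $$ (i,j) * v $ j)"
    unfolding eigen_row[symmetric] by (simp add: norm_mult)
  also have "\<dots> \<le> (\<Sum>j<n. norm (A $$ (i,j)) * ?f j)"
    by (rule order.trans[OF norm_sum]) (simp add: norm_mult)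
  also have "\<dots> \<le> (\<Sum>j<n. norm (A $$ (i,j))) * ?f i"
    unfolding sum_distrib_right by (rule sum_mono) (simp add: imax mult_left_mono)
  also have "\<dots> \<le> S * ?f i" using rows[OF i] pos by (simp add: mult_right_mono)
  finally show ?thesis using pos sr by simp
qed

lemma less_8_cases: "(p :: nat) < 8 \<longleftrightarrow> p \<in> {0, 1, 2, 3, 4, 5, 6, 7}"
  by (auto simp: eval_nat_numeral less_Suc_eq)

lemma less_12_cases: "(p :: nat) < 12 \<longleftrightarrow> p \<in> {0, 1, 2, 3, 4, 5, 6, 7, 8, 9, 10, 11}"
  by (auto simp: eval_nat_numeral less_Suc_eq)

lemma sum_lessThan_8: "(\<Sum>q<(8 :: nat). f q) = f 0 + f 1 + f 2 + f 3 + f 4 + f 5 + f 6 + f 7"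
  by (simp add: eval_nat_numeral)

lemma sum_lessThan_12:
  "(\<Sum>e<(12 :: nat). f e) = f 0 + f 1 + f 2 + f 3 + f 4 + f 5 + f 6 + f 7 + f 8 + f 9 + f 10 + f 11"
  by (simp add: eval_nat_numeral)

(* The matrix D of a cell written out: rows are the nodes p = a + 2b + 4c, columns 0-3, 4-7, 8-11 the
   edges in x-, y- and z-direction, with entry 1 at the lower and -1 at the upper end of an edge. *)
definition cube_incidence :: "real mat" where
  "cube_incidence = mat_of_rows_list 12 [
    [ 1, 0, 0, 0,   1, 0, 0, 0,   1, 0, 0, 0],
    [-1, 0, 0, 0,   0, 1, 0, 0,   0, 1, 0, 0],
    [ 0, 1, 0, 0,  -1, 0, 0, 0,   0, 0, 1, 0],
    [ 0,-1, 0, 0,   0,-1, 0, 0,   0, 0, 0, 1],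
    [ 0, 0, 1, 0,   0, 0, 1, 0,  -1, 0, 0, 0],
    [ 0, 0,-1, 0,   0, 0, 0, 1,   0,-1, 0, 0],
    [ 0, 0, 0, 1,   0, 0,-1, 0,   0, 0,-1, 0],
    [ 0, 0, 0,-1,   0, 0, 0,-1,   0, 0, 0,-1]]"

lemma cube_incidence_carrier: "cube_incidence \<in> carrier_mat 8 12"
  by (simp add: cube_incidence_def mat_of_rows_list_def carrier_matI)

lemma Dmat_eq_cube_incidence: "Dmat = cube_incidence"
proof (rule eq_matI)
  show "dim_row Dmat = dim_row cube_incidence" "dim_col Dmat = dim_col cube_incidence"
    by (simp_all add: Dmat_def cube_incidence_def hcat_def kron_def W1_def mat_of_rows_list_def)
  fix i j assume "i < dim_row cube_incidence" "j < dim_col cube_incidence"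
  hence "i < 8" "j < 12" using cube_incidence_carrier by auto
  thus "Dmat $$ (i, j) = cube_incidence $$ (i, j)"
    unfolding less_8_cases less_12_cases
    by (auto simp: Dmat_def cube_incidence_def hcat_def kron_def W1_def mat_of_rows_list_def)
qed

definition edge_weight :: "real \<Rightarrow> real \<Rightarrow> real \<Rightarrow> nat \<Rightarrow> real" where
  "edge_weight a b c e = (if e < 4 then a else if e < 8 then b else c)"

lemma edge_weight_mult: "edge_weight a b c e * edge_weight a' b' c' e = edge_weight (a * a') (b * b') (c * c') e"
  by (simp add: edge_weight_def)

lemma diag_block_mat_eq_edge_weight:
  "diag_block_mat [a \<cdot>\<^sub>m 1\<^sub>m 4, b \<cdot>\<^sub>m 1\<^sub>m 4, c \<cdot>\<^sub>m 1\<^sub>m 4] = mat_diag 12 (edge_weight a b c)"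
proof (rule eq_matI)
  fix i j assume "i < dim_row (mat_diag 12 (edge_weight a b c))" "j < dim_col (mat_diag 12 (edge_weight a b c))"
  hence "i < 12" "j < 12" by (simp_all add: mat_diag_def)
  thus "diag_block_mat [a \<cdot>\<^sub>m 1\<^sub>m 4, b \<cdot>\<^sub>m 1\<^sub>m 4, c \<cdot>\<^sub>m 1\<^sub>m 4] $$ (i, j) = mat_diag 12 (edge_weight a b c) $$ (i, j)"
    unfolding less_12_cases by (auto simp: mat_diag_def edge_weight_def)
qed (simp_all add: mat_diag_def)

(* Weighted graph Laplacian of the cube with weights a, b, c on the x-, y- and z-edges: nodes p and q
   are joined by an x-, y- or z-edge iff they differ exactly in bit 0, 1 or 2. *)
definition cube_laplacian :: "real \<Rightarrow> real \<Rightarrow> real \<Rightarrow> real mat" where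
  "cube_laplacian a b c = mat 8 8 (\<lambda>(p, q).
     if p = q then a + b + c
     else if p div 2 = q div 2 then - a
     else if p mod 2 = q mod 2 \<and> p div 4 = q div 4 then - b
     else if p mod 4 = q mod 4 then - c else 0)"

lemma dim_cube_laplacian [simp]:
  "dim_row (cube_laplacian a b c) = 8" "dim_col (cube_laplacian a b c) = 8"
  by (simp_all add: cube_laplacian_def)

lemma cube_laplacian_sym: "p < 8 \<Longrightarrow> q < 8 \<Longrightarrow> cube_laplacian a b c $$ (q, p) = cube_laplacian a b c $$ (p, q)"
  unfolding less_8_cases by (auto simp: cube_laplacian_def)

lemma cube_laplacian_abs_row_sum:
  assumes "a \<ge> 0" "b \<ge> 0" "c \<ge> 0" "p < 8"
  shows "(\<Sum>q<8. \<bar>cube_laplacian a b c $$ (p, q)\<bar>) = 2 * (a + b + c)"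
  using assms unfolding sum_lessThan_8 less_8_cases by (auto simp: cube_laplacian_def)

lemma cube_incidence_weighted_gram:
  "cube_incidence * mat_diag 12 (edge_weight a b c) * transpose_mat cube_incidence = cube_laplacian a b c"
proof (rule eq_matI)
  fix i j assume "i < dim_row (cube_laplacian a b c)" "j < dim_col (cube_laplacian a b c)"
  hence ij: "i < 8" "j < 8" by simp_all
  have "(cube_incidence * mat_diag 12 (edge_weight a b c) * transpose_mat cube_incidence) $$ (i, j)
      = (\<Sum>e<12. cube_incidence $$ (i, e) * edge_weight a b c e * cube_incidence $$ (j, e))"
    using ij cube_incidence_carrier
    by (simp add: mat_diag_mult_right[OF cube_incidence_carrier] scalar_prod_def lessThan_atLeast0 mult.assoc)
  also have "\<dots> = cube_laplacian a b c $$ (i, j)"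
    using ij unfolding sum_lessThan_12 less_8_cases
    by (auto simp: cube_laplacian_def cube_incidence_def mat_of_rows_list_def edge_weight_def)
  finally show "(cube_incidence * mat_diag 12 (edge_weight a b c) * transpose_mat cube_incidence) $$ (i, j)
      = cube_laplacian a b c $$ (i, j)" .
qed (use cube_incidence_carrier in \<open>auto simp: cube_laplacian_def\<close>)

lemma Dmat_weighted_gram:
  "Dmat * DS2 dx dy dz * Dl1_inv dx dy dz * transpose_mat Dmat
     = cube_laplacian (dy * dz / (4 * dx)) (dx * dz / (4 * dy)) (dx * dy / (4 * dz))"
proof -
  have "DS2 dx dy dz * Dl1_inv dx dy dz = mat_diag 12 (edge_weight (dy * dz / (4 * dx)) (dx * dz / (4 * dy)) (dx * dy / (4 * dz)))"
    unfolding DS2_def Dl1_inv_def diag_block_mat_eq_edge_weight mat_diag_diag edge_weight_mult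
    by simp
  moreover have "cube_incidence * DS2 dx dy dz * Dl1_inv dx dy dz = cube_incidence * (DS2 dx dy dz * Dl1_inv dx dy dz)"
    unfolding DS2_def Dl1_inv_def diag_block_mat_eq_edge_weight
    by (rule assoc_mult_mat[OF cube_incidence_carrier mat_diag_dim mat_diag_dim])
  ultimately show ?thesis
    unfolding Dmat_eq_cube_incidence by (simp add: cube_incidence_weighted_gram)
qed

definition cube_schroedinger :: "real \<Rightarrow> real \<Rightarrow> real \<Rightarrow> real \<Rightarrow> (nat \<Rightarrow> real) \<Rightarrow> real mat" where
  "cube_schroedinger k a b c d = k \<cdot>\<^sub>m cube_laplacian a b c + mat_diag 8 d"

lemma dim_cube_schroedinger [simp]:
  "dim_row (cube_schroedinger k a b c d) = 8" "dim_col (cube_schroedinger k a b c d) = 8"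
  by (simp_all add: cube_schroedinger_def mat_diag_def)

lemma cube_schroedinger_carrier: "cube_schroedinger k a b c d \<in> carrier_mat 8 8"
  by (simp add: carrier_matI)

lemma index_cube_schroedinger:
  "p < 8 \<Longrightarrow> q < 8 \<Longrightarrow>
    cube_schroedinger k a b c d $$ (p, q) = k * cube_laplacian a b c $$ (p, q) + (if p = q then d p else 0)"
  by (simp add: cube_schroedinger_def mat_diag_def)

lemma transpose_cube_schroedinger: "transpose_mat (cube_schroedinger k a b c d) = cube_schroedinger k a b c d"
proof (rule eq_matI)
  fix p q assume "p < dim_row (cube_schroedinger k a b c d)" "q < dim_col (cube_schroedinger k a b c d)"
  hence "p < 8" "q < 8" by simp_all
  thus "transpose_mat (cube_schroedinger k a b c d) $$ (p, q) = cube_schroedinger k a b c d $$ (p, q)"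
    by (simp add: index_cube_schroedinger cube_laplacian_sym)
qed simp_all

lemma cube_schroedinger_nonzero:
  assumes "k \<noteq> 0" and "a \<noteq> 0"
  shows "cube_schroedinger k a b c d \<noteq> 0\<^sub>m 8 8"
proof
  assume "cube_schroedinger k a b c d = 0\<^sub>m 8 8"
  hence "cube_schroedinger k a b c d $$ (0, 1) = 0" by simp
  thus False using assms by (simp add: index_cube_schroedinger cube_laplacian_def)
qed

lemma cube_schroedinger_abs_row_sum_le:
  assumes "k \<ge> 0" "a \<ge> 0" "b \<ge> 0" "c \<ge> 0" "p < 8"
  shows "(\<Sum>q<8. \<bar>cube_schroedinger k a b c d $$ (p, q)\<bar>) \<le> 2 * k * (a + b + c) + \<bar>d p\<bar>"
proof -
  have "(\<Sum>q<8. \<bar>cube_schroedinger k a b c d $$ (p, q)\<bar>)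
      \<le> (\<Sum>q<8. k * \<bar>cube_laplacian a b c $$ (p, q)\<bar> + (if p = q then \<bar>d p\<bar> else 0))"
    using assms
    by (intro sum_mono) (auto simp: index_cube_schroedinger abs_mult intro: order.trans[OF abs_triangle_ineq])
  also have "\<dots> = k * (\<Sum>q<8. \<bar>cube_laplacian a b c $$ (p, q)\<bar>) + \<bar>d p\<bar>"
    using assms by (simp add: sum.distrib sum_distrib_left)
  also have "\<dots> = 2 * k * (a + b + c) + \<bar>d p\<bar>"
    using assms by (simp add: cube_laplacian_abs_row_sum algebra_simps)
  finally show ?thesis .
qed

lemma spectral_radius_cube_schroedinger_le:
  assumes "k \<ge> 0" "a \<ge> 0" "b \<ge> 0" "c \<ge> 0" and d: "\<And>p. p < 8 \<Longrightarrow> \<bar>d p\<bar> \<le> D"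
  shows "spectral_radius (map_mat complex_of_real (cube_schroedinger k a b c d)) \<le> 2 * k * (a + b + c) + D"
proof (rule spectral_radius_le_row_sum)
  fix p :: nat assume p: "p < 8"
  have "(\<Sum>q<8. norm (map_mat complex_of_real (cube_schroedinger k a b c d) $$ (p, q)))
      = (\<Sum>q<8. \<bar>cube_schroedinger k a b c d $$ (p, q)\<bar>)"
    using p by (intro sum.cong) auto
  also have "\<dots> \<le> 2 * k * (a + b + c) + \<bar>d p\<bar>"
    using assms(1-4) p by (rule cube_schroedinger_abs_row_sum_le)
  finally show "(\<Sum>q<8. norm (map_mat complex_of_real (cube_schroedinger k a b c d) $$ (p, q)))
      \<le> 2 * k * (a + b + c) + D"
    using d[OF p] by linarith
qed (simp_all add: cube_schroedinger_carrier)

lemma scalar_sandwich_mat: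
  assumes "(A :: 'a :: comm_semiring_1 mat) \<in> carrier_mat n n"
  shows "(c \<cdot>\<^sub>m 1\<^sub>m n) * A * (c \<cdot>\<^sub>m 1\<^sub>m n) = (c * c) \<cdot>\<^sub>m A"
  using assms by (intro eq_matI) (auto simp: mult_smult_assoc_mat mult_smult_distrib ac_simps)

lemma dim_DU [simp]: "dim_row (DU u) = 8" "dim_col (DU u) = 8"
  by (simp_all add: DU_def mat_diag_def)

lemma Hcell_eq:
  "Hcell hbar m dx dy dz u = (hbar\<^sup>2 / (2 * m)) \<cdot>\<^sub>m cube_laplacian (dy * dz / (4 * dx)) (dx * dz / (4 * dy)) (dx * dy / (4 * dz))
     + (dx * dy * dz / 8) \<cdot>\<^sub>m DU u"
  unfolding Hcell_def Dmat_weighted_gram DV2_def DU_def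
  by (simp add: mult_smult_assoc_mat[of _ 8 8 _ 8] left_mult_one_mat[OF mat_diag_dim])

lemma cfl_gen_cell_eq:
  assumes "hbar > 0" and "m > 0" and "dx > 0" and "dy > 0" and "dz > 0"
  shows "cfl_gen_cell hbar m dx dy dz u = 2 / spectral_radius (map_mat complex_of_real
    (cube_schroedinger (4 * hbar / (m * (dx * dy * dz)))
       (dy * dz / (4 * dx)) (dx * dz / (4 * dy)) (dx * dy / (4 * dz))
       (\<lambda>p. u (p mod 2) (p div 2 mod 2) (p div 4) / hbar)))"
proof -
  let ?V = "dx * dy * dz"
  let ?L = "cube_laplacian (dy * dz / (4 * dx)) (dx * dz / (4 * dy)) (dx * dy / (4 * dz))"
  let ?R = "cube_schroedinger (4 * hbar / (m * ?V)) (dy * dz / (4 * dx)) (dx * dz / (4 * dy)) (dx * dy / (4 * dz))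
    (\<lambda>p. u (p mod 2) (p div 2 mod 2) (p div 4) / hbar)"
  let ?H = "Hcell hbar m dx dy dz u"
  have H: "?H \<in> carrier_mat 8 8" by (simp add: Hcell_eq carrier_matI)
  have sqrt: "(1 / sqrt (?V / 8)) * (1 / sqrt (?V / 8)) = 8 / ?V"
    using assms by (simp add: real_sqrt_mult[symmetric])
  have scale: "(1 / hbar) * ((8 / ?V) * ((hbar\<^sup>2 / (2 * m)) * x + (?V / 8) * y))
      = (4 * hbar / (m * ?V)) * x + y / hbar" for x y
    using assms by (simp add: field_simps power2_eq_square)
  from sqrt have "(1 / hbar) \<cdot>\<^sub>m (DV2_inv_sqrt dx dy dz * ?H * DV2_inv_sqrt dx dy dz)
      = (1 / hbar) \<cdot>\<^sub>m ((8 / ?V) \<cdot>\<^sub>m ?H)"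
    unfolding DV2_inv_sqrt_def scalar_sandwich_mat[OF H] by simp
  also have "\<dots> = ?R"
  proof (rule eq_matI)
    fix i j assume "i < dim_row ?R" and "j < dim_col ?R"
    hence ij: "i < 8" "j < 8" by simp_all
    have "((1 / hbar) \<cdot>\<^sub>m ((8 / ?V) \<cdot>\<^sub>m ?H)) $$ (i, j)
        = (1 / hbar) * ((8 / ?V) * ((hbar\<^sup>2 / (2 * m)) * ?L $$ (i, j) + (?V / 8) * DU u $$ (i, j)))"
      using ij by (simp add: Hcell_eq)
    also have "\<dots> = (4 * hbar / (m * ?V)) * ?L $$ (i, j) + DU u $$ (i, j) / hbar"
      using scale .
    also have "\<dots> = ?R $$ (i, j)"
      using ij by (simp add: index_cube_schroedinger DU_def mat_diag_def)
    finally show "((1 / hbar) \<cdot>\<^sub>m ((8 / ?V) \<cdot>\<^sub>m ?H)) $$ (i, j) = ?R $$ (i, j)" .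
  qed (use H in simp_all)
  finally show ?thesis unfolding cfl_gen_cell_def by simp
qed

lemma cfl_gen_cell_ge:
  assumes "hbar > 0" and "m > 0" and "dx > 0" and "dy > 0" and "dz > 0"
    and u: "\<And>a b c. a \<le> 1 \<Longrightarrow> b \<le> 1 \<Longrightarrow> c \<le> 1 \<Longrightarrow> \<bar>u a b c\<bar> \<le> M"
  shows "2 / ((2 * hbar / m) * (1 / dx\<^sup>2 + 1 / dy\<^sup>2 + 1 / dz\<^sup>2) + M / hbar) \<le> cfl_gen_cell hbar m dx dy dz u"
proof -
  let ?k = "4 * hbar / (m * (dx * dy * dz))"
  let ?a = "dy * dz / (4 * dx)" and ?b = "dx * dz / (4 * dy)" and ?c = "dx * dy / (4 * dz)"
  let ?d = "\<lambda>p. u (p mod 2) (p div 2 mod 2) (p div 4) / hbar"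
  let ?A = "map_mat complex_of_real (cube_schroedinger ?k ?a ?b ?c ?d)"
  have "\<bar>?d p\<bar> \<le> M / hbar" if "p < 8" for p
    using that assms by (auto simp: divide_right_mono intro!: u)
  hence "spectral_radius ?A \<le> 2 * ?k * (?a + ?b + ?c) + M / hbar"
    using assms by (intro spectral_radius_cube_schroedinger_le) auto
  also have "2 * ?k * (?a + ?b + ?c) = (2 * hbar / m) * (1 / dx\<^sup>2 + 1 / dy\<^sup>2 + 1 / dz\<^sup>2)"
    using assms by (simp add: field_simps power2_eq_square)
  finally have "spectral_radius ?A \<le> (2 * hbar / m) * (1 / dx\<^sup>2 + 1 / dy\<^sup>2 + 1 / dz\<^sup>2) + M / hbar" .
  moreover have "spectral_radius ?A > 0"
    using assms by (intro spectral_radius_pos_if_symmetric[OF cube_schroedinger_carrier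
        transpose_cube_schroedinger] cube_schroedinger_nonzero) auto
  ultimately have "2 / ((2 * hbar / m) * (1 / dx\<^sup>2 + 1 / dy\<^sup>2 + 1 / dz\<^sup>2) + M / hbar) \<le> 2 / spectral_radius ?A"
    by (intro divide_left_mono) auto
  thus ?thesis unfolding cfl_gen_cell_eq[OF assms(1-5)] .
qed

theorem corollary1:
  fixes hbar m dx dy dz :: real and nx ny nz :: nat
    and U :: "nat \<Rightarrow> nat \<Rightarrow> nat \<Rightarrow> real"
  assumes "hbar > 0" and "m > 0" and "dx > 0" and "dy > 0" and "dz > 0"
    and "nx \<ge> 1" and "ny \<ge> 1" and "nz \<ge> 1"
  shows "cfl_region hbar m dx dy dz nx ny nz U \<le>
    Min {cfl_gen_cell hbar m dx dy dz (\<lambda>a b c. U (i + a) (j + b) (k + c)) | i j k.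
           i \<in> {1..nx} \<and> j \<in> {1..ny} \<and> k \<in> {1..nz}}"
proof -
  let ?nodes = "{1..nx+1} \<times> {1..ny+1} \<times> {1..nz+1}" and ?cells = "{1..nx} \<times> {1..ny} \<times> {1..nz}"
  let ?G = "{\<bar>U i j k\<bar> | i j k. i \<in> {1..nx+1} \<and> j \<in> {1..ny+1} \<and> k \<in> {1..nz+1}}"
  let ?C = "{cfl_gen_cell hbar m dx dy dz (\<lambda>a b c. U (i + a) (j + b) (k + c)) | i j k.
           i \<in> {1..nx} \<and> j \<in> {1..ny} \<and> k \<in> {1..nz}}"
  have "?G \<subseteq> (\<lambda>(i, j, k). \<bar>U i j k\<bar>) ` ?nodes" by force
  hence G: "finite ?G" by (rule finite_subset) simp
  have "?C \<subseteq> (\<lambda>(i, j, k). cfl_gen_cell hbar m dx dy dz (\<lambda>a b c. U (i + a) (j + b) (k + c))) ` ?cells"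
    by force
  hence C_finite: "finite ?C" by (rule finite_subset) simp
  have C_nonempty: "?C \<noteq> {}" using assms(6-8) by auto
  show ?thesis
    unfolding cfl_region_def Min_ge_iff[OF C_finite C_nonempty]
  proof (intro ballI, elim CollectE exE conjE)
    fix x i j k assume x: "x = cfl_gen_cell hbar m dx dy dz (\<lambda>a b c. U (i + a) (j + b) (k + c))"
      and cell: "i \<in> {1..nx}" "j \<in> {1..ny}" "k \<in> {1..nz}"
    have "\<bar>U (i + a) (j + b) (k + c)\<bar> \<le> Max ?G" if "a \<le> 1" "b \<le> 1" "c \<le> 1" for a b c
      using that cell by (intro Max_ge[OF G]) force
    then show "2 / ((2 * hbar / m) * (1 / dx\<^sup>2 + 1 / dy\<^sup>2 + 1 / dz\<^sup>2) + Max ?G / hbar) \<le> x"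
      unfolding x by (rule cfl_gen_cell_ge[OF assms(1-5)])
  qed
qed

end
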